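(* Consider the decoupled system \[ \begin{aligned} \frac{dS}{dt}&= B-\beta S(t)\int_{t_0}^{h_1} f_{T_1}(s)e^{-\mu_v s}G(I(t-s))\,ds-\mu S(t)+\alpha\int_{t_0}^{\infty} f_{T_3}(r)I(t-r)e^{-\mu r}\,dr,\\ \frac{dI}{dt}&= \beta\int_{t_0}^{h_2} f_{T_2}(u)S(t-u)\int_{t_0}^{h_1} f_{T_1}(s)e^{-\mu_v s-\mu u}G(I(t-s-u))\,ds\,du-(\mu+d+\alpha)I(t), \end{aligned} \] (the $S$ and $I$ equations of the full SEIRS system with additionally $E'=\beta S\int f_{T_1}(s)e^{-\mu_v s}G(I(t-s))ds-\mu E-\beta\int\!\!\int f_{T_2}(u)f_{T_1}(s)S(t-u)e^{-\mu_v s-\mu u}G(I(t-s-u))dsdu$ and $R'=\alpha I-\mu R-\alpha\int f_{T_3}(r)I(t-r)e^{-\mu r}dr$), with initial data $\varphi_k\in UC_g$, $\varphi_k(t_0)>0$, and consider positive solutions lying in $D^{expl}(\infty)=\{Y\in\mathbb{R}^4_+:\ \frac{B}{\mu+d}\le S+E+I+R\le\frac{B}{\mu}\}$. Let $R_0^*=\frac{\beta}{\mu+d+\alpha}$ and $E(e^{-(\mu_vT_1+\mu T_2)})=\int_{t_0}^{h_2}\int_{t_0}^{h_1}e^{-\mu_v s-\mu u}f_{T_2}(u)f_{T_1}(s)\,ds\,du$, and suppose that either (1) $R_0^*\ge1$ and $E(e^{-(\mu_vT_1+\mu T_2)})<\frac{1}{R_0^*}$, or (2) $R_0^*<1$.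 Then in $D^{expl}(\infty)$ the susceptible state satisfies \[ \lim_{t\to\infty}\frac{1}{t}\int_{t_0}^{t}S(\xi)\,d\xi=\frac{B}{\mu}\equiv1 . \]
   Context: Constants: $t_0\ge0$, $h_1,h_2>0$, $B,\beta,\mu,\mu_v,\alpha>0$, $d\ge0$, with $B/\mu=1$. $T_1,T_2,T_3$ are random delays with probability densities $f_{T_1}$ on $[t_0,h_1]$, $f_{T_2}$ on $[t_0,h_2]$, $f_{T_3}$ on $[t_0,\infty)$. $G:[0,\infty)\to[0,\infty)$ satisfies: (A1) $G(0)=0$; (A2) strictly monotonic; (A3) $G\in C^2$, $G''<0$; (A4) $\lim_{I\to\infty}G(I)=C\in[0,\infty)$; (A5) $G(I)\le I$ for $I>0$; (A6) $\left(\frac{G(x)}{x}-\frac{G(y)}{y}\right)(G(x)-G(y))\le0$ for $x,y\ge0$. $UC_g$ is the space of continuous $\varphi:(-\infty,t_0]\to\mathbb{R}_+$ with $\sup_{t\le t_0}|\varphi(t)|/g(t)<\infty$ and $|\varphi|/g$ uniformly continuous, for a continuous non-increasing $g\ge1$ with $g(t_0)=1$, $\lim_{u\to t_0^-}g(t+u)/g(t)=1$ uniformly in $t\ge t_0$, $\lim_{t\to-\infty}g(t)=\infty$. *)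

theory Defs
  imports "HOL-Analysis.Analysis"
begin

definition UCg_weight :: "real \<Rightarrow> (real \<Rightarrow> real) \<Rightarrow> bool" where
  "UCg_weight t0 g \<longleftrightarrow>
     continuous_on {..t0} g \<and>
     (\<forall>x y. x \<le> y \<and> y \<le> t0 \<longrightarrow> g y \<le> g x) \<and>
     (\<forall>t\<le>t0. 1 \<le> g t) \<and> g t0 = 1 \<and>
     (\<forall>\<epsilon>>0. \<exists>\<delta>>0. \<forall>u. -\<delta> < u \<and> u < 0 \<longrightarrow>
          (\<forall>t\<le>t0. \<bar>g (t + u) / g t - 1\<bar> < \<epsilon>)) \<and>
     filterlim g at_top at_bot"

definition UCg :: "real \<Rightarrow> (real \<Rightarrow> real) \<Rightarrow> (real \<Rightarrow> real) \<Rightarrow> bool" where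
  "UCg t0 g \<phi> \<longleftrightarrow>
     continuous_on {..t0} \<phi> \<and> (\<forall>t\<le>t0. 0 \<le> \<phi> t) \<and>
     bounded ((\<lambda>t. \<bar>\<phi> t\<bar> / g t) ` {..t0}) \<and>
     uniformly_continuous_on {..t0} (\<lambda>t. \<bar>\<phi> t\<bar> / g t)"

definition density_on :: "real set \<Rightarrow> (real \<Rightarrow> real) \<Rightarrow> bool" where
  "density_on A f \<longleftrightarrow> (\<forall>s\<in>A. 0 \<le> f s) \<and> (f has_integral 1) A"

text \<open>Assumptions (A1)--(A6) on G. (A6) is imposed for x, y > 0, since G(x)/x is
  undefined at x = 0.\<close>
definition G_admissible :: "(real \<Rightarrow> real) \<Rightarrow> bool" where
  "G_admissible G \<longleftrightarrow>
     (\<forall>x\<ge>0. 0 \<le> G x) \<and>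
     G 0 = 0 \<and>
     strict_mono_on {0..} G \<and>
     (\<exists>G' G''. (\<forall>x\<ge>0. (G has_real_derivative G' x) (at x within {0..}) \<and>
                        (G' has_real_derivative G'' x) (at x within {0..}) \<and>
                        G'' x < 0) \<and> continuous_on {0..} G'') \<and>
     (\<exists>C\<ge>0. (G \<longlongrightarrow> C) at_top) \<and>
     (\<forall>x>0. G x \<le> x) \<and>
     (\<forall>x>0. \<forall>y>0. (G x / x - G y / y) * (G x - G y) \<le> 0)"

definition incid1 :: "real \<Rightarrow> real \<Rightarrow> (real \<Rightarrow> real) \<Rightarrow> real \<Rightarrow> (real \<Rightarrow> real)
                      \<Rightarrow> (real \<Rightarrow> real) \<Rightarrow> real \<Rightarrow> real" where
  "incid1 t0 h1 fT1 mu_v G I t =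
     integral {t0..h1} (\<lambda>s. fT1 s * exp (- mu_v * s) * G (I (t - s)))"

definition incid2_inner :: "real \<Rightarrow> real \<Rightarrow> (real \<Rightarrow> real) \<Rightarrow> real \<Rightarrow> real \<Rightarrow> (real \<Rightarrow> real)
                      \<Rightarrow> (real \<Rightarrow> real) \<Rightarrow> real \<Rightarrow> real \<Rightarrow> real" where
  "incid2_inner t0 h1 fT1 mu_v mu G I t u =
     integral {t0..h1} (\<lambda>s. fT1 s * exp (- mu_v * s - mu * u) * G (I (t - s - u)))"

definition incid2 :: "real \<Rightarrow> real \<Rightarrow> real \<Rightarrow> (real \<Rightarrow> real) \<Rightarrow> (real \<Rightarrow> real) \<Rightarrow> real \<Rightarrow> real
                      \<Rightarrow> (real \<Rightarrow> real) \<Rightarrow> (real \<Rightarrow> real) \<Rightarrow> (real \<Rightarrow> real) \<Rightarrow> real \<Rightarrow> real" where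
  "incid2 t0 h1 h2 fT1 fT2 mu_v mu G S I t =
     integral {t0..h2} (\<lambda>u. fT2 u * S (t - u) * incid2_inner t0 h1 fT1 mu_v mu G I t u)"

definition recov3 :: "real \<Rightarrow> (real \<Rightarrow> real) \<Rightarrow> real \<Rightarrow> (real \<Rightarrow> real) \<Rightarrow> real \<Rightarrow> real" where
  "recov3 t0 fT3 mu I t = integral {t0..} (\<lambda>r. fT3 r * I (t - r) * exp (- mu * r))"

definition SEIRS_solution ::
  "real \<Rightarrow> real \<Rightarrow> real \<Rightarrow> real \<Rightarrow> real \<Rightarrow> real \<Rightarrow> real \<Rightarrow> real \<Rightarrow> real
   \<Rightarrow> (real \<Rightarrow> real) \<Rightarrow> (real \<Rightarrow> real) \<Rightarrow> (real \<Rightarrow> real) \<Rightarrow> (real \<Rightarrow> real)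
   \<Rightarrow> (real \<Rightarrow> real) \<Rightarrow> (real \<Rightarrow> real) \<Rightarrow> (real \<Rightarrow> real) \<Rightarrow> (real \<Rightarrow> real) \<Rightarrow> bool"
  where
  "SEIRS_solution t0 h1 h2 B beta mu mu_v alpha d fT1 fT2 fT3 G S E I R \<longleftrightarrow>
    (\<forall>t\<ge>t0.
       (\<lambda>s. fT1 s * exp (- mu_v * s) * G (I (t - s))) integrable_on {t0..h1} \<and>
       (\<forall>u\<in>{t0..h2}. (\<lambda>s. fT1 s * exp (- mu_v * s - mu * u) * G (I (t - s - u)))
                          integrable_on {t0..h1}) \<and>
       (\<lambda>u. fT2 u * S (t - u) * incid2_inner t0 h1 fT1 mu_v mu G I t u) integrable_on {t0..h2} \<and>
       (\<lambda>r. fT3 r * I (t - r) * exp (- mu * r)) integrable_on {t0..} \<and>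
       (S has_real_derivative
          (B - beta * S t * incid1 t0 h1 fT1 mu_v G I t - mu * S t
             + alpha * recov3 t0 fT3 mu I t)) (at t within {t0..}) \<and>
       (E has_real_derivative
          (beta * S t * incid1 t0 h1 fT1 mu_v G I t - mu * E t
             - beta * incid2 t0 h1 h2 fT1 fT2 mu_v mu G S I t)) (at t within {t0..}) \<and>
       (I has_real_derivative
          (beta * incid2 t0 h1 h2 fT1 fT2 mu_v mu G S I t - (mu + d + alpha) * I t))
          (at t within {t0..}) \<and>
       (R has_real_derivative
          (alpha * I t - mu * R t - alpha * recov3 t0 fT3 mu I t)) (at t within {t0..}))"

definition D_expl :: "real \<Rightarrow> real \<Rightarrow> real \<Rightarrow> real \<Rightarrow> real \<Rightarrow> real \<Rightarrow> real \<Rightarrow> bool" where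
  "D_expl B mu d s e i r \<longleftrightarrow> 0 \<le> s \<and> 0 \<le> e \<and> 0 \<le> i \<and> 0 \<le> r \<and>
      B / (mu + d) \<le> s + e + i + r \<and> s + e + i + r \<le> B / mu"

definition R0_star :: "real \<Rightarrow> real \<Rightarrow> real \<Rightarrow> real \<Rightarrow> real" where
  "R0_star beta mu d alpha = beta / (mu + d + alpha)"

definition exp_moment :: "real \<Rightarrow> real \<Rightarrow> real \<Rightarrow> (real \<Rightarrow> real) \<Rightarrow> (real \<Rightarrow> real)
                          \<Rightarrow> real \<Rightarrow> real \<Rightarrow> real" where
  "exp_moment t0 h1 h2 fT1 fT2 mu_v mu =
     integral {t0..h2} (\<lambda>u. integral {t0..h1} (\<lambda>s. exp (- mu_v * s - mu * u) * fT2 u * fT1 s))"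

end

theory Submission
  imports Defs "HOL-Real_Asymp.Real_Asymp"
begin

(* Once I is eventually bounded by m, the infection term of the I-equation is at most
   beta E(exp(-(mu_v T1 + mu T2))) m, so I satisfies a linear differential inequality whose
   equilibrium is r m with r = beta E(exp(-(mu_v T1 + mu T2))) / (mu + d + alpha); under either
   threshold condition r < 1. Iterating this contraction drives I to 0. The incidence in the
   S-equation then vanishes, so S' >= mu - (mu + o(1)) S and, with S <= B/mu = 1, S tends to 1.
   By L'Hopital the time average of S has the same limit. *)

lemma density_mult_continuous_integrable:
  fixes f g :: "real \<Rightarrow> real"
  assumes "density_on {a..b} f" "continuous_on {a..b} g"
  shows "(\<lambda>s. f s * g s) integrable_on {a..b}"
proof -
  have "f absolutely_integrable_on {a..b}"
    using assms(1) by (intro nonnegative_absolutely_integrable_1) (auto simp: density_on_def)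
  moreover have "g \<in> borel_measurable (lebesgue_on {a..b})"
    using assms(2) by (intro continuous_imp_measurable_on_sets_lebesgue) auto
  moreover have "bounded (g ` {a..b})"
    using assms(2) by (intro compact_imp_bounded compact_continuous_image) auto
  ultimately have "(\<lambda>s. g s * f s) absolutely_integrable_on {a..b}"
    by (intro absolutely_integrable_bounded_measurable_product_real) auto
  then show ?thesis
    by (simp add: mult.commute absolutely_integrable_on_def)
qed

lemma density_mult_exp_integrable:
  assumes "density_on {a..b} f"
  shows "(\<lambda>s. f s * exp (- c * s)) integrable_on {a..b}"
  using assms by (intro density_mult_continuous_integrable continuous_intros)

lemma integral_density_mult_le:
  fixes f g :: "real \<Rightarrow> real"
  assumes "density_on A f" "(\<lambda>s. f s * g s) integrable_on A" "\<And>s. s \<in> A \<Longrightarrow> g s \<le> m"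
  shows "integral A (\<lambda>s. f s * g s) \<le> m"
proof -
  have f: "(f has_integral 1) A" "\<And>s. s \<in> A \<Longrightarrow> 0 \<le> f s"
    using assms(1) by (auto simp: density_on_def)
  have "integral A (\<lambda>s. f s * g s) \<le> integral A (\<lambda>s. f s * m)"
    using assms(2,3) f by (intro integral_le integrable_on_mult_left) (auto intro: mult_left_mono)
  also have "\<dots> = m"
    using f(1) by (simp add: integral_unique)
  finally show ?thesis .
qed

definition exp_mean :: "real set \<Rightarrow> (real \<Rightarrow> real) \<Rightarrow> real \<Rightarrow> real" where
  "exp_mean A f c = integral A (\<lambda>s. f s * exp (- c * s))"

lemma exp_moment_eq_exp_mean_mult:
  "exp_moment t0 h1 h2 fT1 fT2 mu_v mu = exp_mean {t0..h1} fT1 mu_v * exp_mean {t0..h2} fT2 mu"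
proof -
  have "integral {t0..h1} (\<lambda>s. exp (- mu_v * s - mu * u) * fT2 u * fT1 s)
      = fT2 u * exp (- mu * u) * exp_mean {t0..h1} fT1 mu_v" for u
    by (simp add: exp_mean_def exp_diff exp_minus field_simps flip: integral_mult_right)
  then show ?thesis
    by (simp add: exp_moment_def exp_mean_def mult_ac flip: integral_mult_right)
qed

lemma exp_mean_nonneg:
  assumes "density_on {a..b} f"
  shows "0 \<le> exp_mean {a..b} f c"
  using assms density_mult_exp_integrable[OF assms]
  unfolding exp_mean_def by (intro integral_nonneg) (auto simp: density_on_def)

lemma exp_mean_le_one:
  assumes "density_on {a..b} f" "0 \<le> a" "0 \<le> c"
  shows "exp_mean {a..b} f c \<le> 1"
  unfolding exp_mean_def
  using assms by (intro integral_density_mult_le density_mult_exp_integrable) auto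

lemma exp_moment_le_one:
  assumes "density_on {t0..h1} fT1" "density_on {t0..h2} fT2" "0 \<le> t0" "0 \<le> mu_v" "0 \<le> mu"
  shows "exp_moment t0 h1 h2 fT1 fT2 mu_v mu \<le> 1"
  unfolding exp_moment_eq_exp_mean_mult
  using assms by (intro mult_le_one exp_mean_le_one exp_mean_nonneg)

lemma linear_differential_inequality_bound:
  fixes f f' :: "real \<Rightarrow> real"
  assumes "c \<noteq> 0" "T \<le> t"
    and deriv: "\<And>x. x \<in> {T..t} \<Longrightarrow> (f has_real_derivative f' x) (at x)"
    and ineq: "\<And>x. x \<in> {T..t} \<Longrightarrow> f' x \<le> a - c * f x"
  shows "f t \<le> a / c + (f T - a / c) * exp (- c * (t - T))"
proof -
  define h where "h x = (f x - a / c) * exp (c * (x - T))" for x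
  have "h t \<le> h T"
  proof (rule DERIV_nonpos_imp_nonincreasing[OF \<open>T \<le> t\<close>])
    fix x assume x: "T \<le> x" "x \<le> t"
    have "(h has_real_derivative (f' x + c * f x - a) * exp (c * (x - T))) (at x)"
      unfolding h_def using deriv[of x] x \<open>c \<noteq> 0\<close>
      by (auto intro!: derivative_eq_intros simp: field_simps)
    moreover have "(f' x + c * f x - a) * exp (c * (x - T)) \<le> 0"
      using ineq[of x] x by (intro mult_nonpos_nonneg) auto
    ultimately show "\<exists>y. (h has_real_derivative y) (at x) \<and> y \<le> 0" by blast
  qed
  then have "(f t - a / c) * exp (c * (t - T)) * exp (- c * (t - T))
      \<le> (f T - a / c) * exp (- c * (t - T))"
    by (simp add: h_def)
  then show ?thesis
    by (simp add: mult.assoc flip: exp_add)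
qed

lemma eventually_less_of_linear_differential_inequality:
  fixes f f' :: "real \<Rightarrow> real"
  assumes "0 < c" "a / c < b"
    and "eventually (\<lambda>x. (f has_real_derivative f' x) (at x) \<and> f' x \<le> a - c * f x) at_top"
  shows "eventually (\<lambda>t. f t < b) at_top"
proof -
  obtain T where T: "\<And>x. T \<le> x \<Longrightarrow> (f has_real_derivative f' x) (at x) \<and> f' x \<le> a - c * f x"
    using assms(3) by (auto simp: eventually_at_top_linorder)
  have "((\<lambda>t. a / c + (f T - a / c) * exp (- c * (t - T))) \<longlongrightarrow> a / c + (f T - a / c) * 0) at_top"
    using \<open>0 < c\<close> by (intro tendsto_intros) real_asymp
  then have limit: "eventually (\<lambda>t. a / c + (f T - a / c) * exp (- c * (t - T)) < b) at_top"
    using assms(2) by (intro order_tendstoD(2)) auto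
  have bound: "f t \<le> a / c + (f T - a / c) * exp (- c * (t - T))" if "T \<le> t" for t
    using \<open>0 < c\<close> T that by (intro linear_differential_inequality_bound) auto
  show ?thesis
    using limit eventually_ge_at_top[of T]
  proof eventually_elim
    case (elim t)
    then show ?case using bound[of t] by linarith
  qed
qed

lemma eventually_greater_of_linear_differential_inequality:
  fixes f f' :: "real \<Rightarrow> real"
  assumes "0 < c" "b < a / c"
    and "eventually (\<lambda>x. (f has_real_derivative f' x) (at x) \<and> a - c * f x \<le> f' x) at_top"
  shows "eventually (\<lambda>t. b < f t) at_top"
proof -
  have "eventually (\<lambda>x. ((\<lambda>x. - f x) has_real_derivative - f' x) (at x)
      \<and> - f' x \<le> - a - c * - f x) at_top"
    using assms(3) by eventually_elim (auto intro: DERIV_minus)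
  from eventually_less_of_linear_differential_inequality[OF assms(1) _ this, of "- b"]
  show ?thesis using assms(2) by simp
qed

lemma tendsto_zero_of_eventual_contraction:
  fixes f :: "'a \<Rightarrow> real"
  assumes "0 < q" "q < 1" "0 < M"
    and "eventually (\<lambda>x. 0 \<le> f x) F" "eventually (\<lambda>x. f x \<le> M) F"
    and contraction: "\<And>m. 0 < m \<Longrightarrow> eventually (\<lambda>x. f x \<le> m) F \<Longrightarrow> eventually (\<lambda>x. f x \<le> q * m) F"
  shows "(f \<longlongrightarrow> 0) F"
proof (rule order_tendstoI)
  fix e :: real assume "e < 0"
  show "eventually (\<lambda>x. e < f x) F"
    using assms(4) by eventually_elim (use \<open>e < 0\<close> in auto)
next
  fix e :: real assume "0 < e"
  have powers: "eventually (\<lambda>x. f x \<le> q ^ n * M) F" for n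
    by (induction n) (use assms in \<open>auto simp: mult.assoc\<close>)
  obtain n where "q ^ n < e / M"
    using real_arch_pow_inv \<open>0 < e\<close> \<open>0 < M\<close> \<open>q < 1\<close> by (metis divide_pos_pos)
  then have "q ^ n * M < e"
    using \<open>0 < M\<close> by (simp add: pos_less_divide_eq)
  show "eventually (\<lambda>x. f x < e) F"
    using powers[of n] by eventually_elim (use \<open>q ^ n * M < e\<close> in auto)
qed

lemma tendsto_integral_average_at_top:
  fixes f :: "real \<Rightarrow> real"
  assumes "continuous_on {a..} f" "(f \<longlongrightarrow> L) at_top"
  shows "((\<lambda>t. (1 / t) * integral {a..t} f) \<longlongrightarrow> L) at_top"
proof -
  have deriv: "((\<lambda>x. integral {a..x} f) has_real_derivative f t) (at t)" if "a < t" for t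
  proof -
    have "((\<lambda>x. integral {a..x} f) has_real_derivative f t) (at t within {a..t+1})"
      using that continuous_on_subset[OF assms(1)] by (intro integral_has_real_derivative) auto
    moreover have "at t within {a..t+1} = at t"
      using that by (intro at_within_interior) auto
    ultimately show ?thesis by simp
  qed
  have "((\<lambda>t. integral {a..t} f / t) \<longlongrightarrow> L) at_top"
  proof (rule lhospital_at_top_at_top[where g' = "\<lambda>_. 1"])
    show "filterlim (\<lambda>x. x) at_top at_top"
      by (rule filterlim_ident)
    show "eventually (\<lambda>t. ((\<lambda>x. integral {a..x} f) has_real_derivative f t) (at t)) at_top"
      using eventually_gt_at_top[of a] by eventually_elim (rule deriv)
    show "eventually (\<lambda>t. ((\<lambda>x. x) has_real_derivative 1) (at t)) at_top"
      by (simp add: DERIV_ident)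
    show "((\<lambda>t. f t / 1) \<longlongrightarrow> L) at_top"
      using assms(2) by simp
  qed simp
  then show ?thesis by simp
qed

lemma at_within_atLeast_eq:
  fixes a x :: real
  shows "a < x \<Longrightarrow> at x within {a..} = at x"
  by (intro at_within_interior) simp

locale SEIRS_extinction =
  fixes t0 h1 h2 B beta mu mu_v alpha d :: real
    and fT1 fT2 fT3 G S E I R :: "real \<Rightarrow> real"
  assumes t0_nonneg: "0 \<le> t0" and h1_nonneg: "0 \<le> h1" and h2_nonneg: "0 \<le> h2"
    and beta_pos: "0 < beta" and mu_pos: "0 < mu" and mu_v_nonneg: "0 \<le> mu_v"
    and alpha_nonneg: "0 \<le> alpha" and d_nonneg: "0 \<le> d" and B_eq_mu: "B = mu"
    and density1: "density_on {t0..h1} fT1" and density2: "density_on {t0..h2} fT2"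
    and density3: "density_on {t0..} fT3"
    and G_bounds: "\<And>x. 0 \<le> x \<Longrightarrow> 0 \<le> G x \<and> G x \<le> x"
    and I_nonneg: "\<And>t. 0 \<le> I t" \<comment> \<open>on the whole line: recov3 integrates I over the history\<close>
    and S_bounds: "\<And>t. t0 \<le> t \<Longrightarrow> 0 \<le> S t \<and> S t \<le> 1"
    and I_le_1: "\<And>t. t0 \<le> t \<Longrightarrow> I t \<le> 1"
    and solution: "SEIRS_solution t0 h1 h2 B beta mu mu_v alpha d fT1 fT2 fT3 G S E I R"
    and below_threshold: "beta * exp_moment t0 h1 h2 fT1 fT2 mu_v mu < mu + d + alpha"
begin

abbreviation S_rate :: "real \<Rightarrow> real" where
  "S_rate t \<equiv> mu - beta * S t * incid1 t0 h1 fT1 mu_v G I t - mu * S t + alpha * recov3 t0 fT3 mu I t"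

abbreviation I_rate :: "real \<Rightarrow> real" where
  "I_rate t \<equiv> beta * incid2 t0 h1 h2 fT1 fT2 mu_v mu G S I t - (mu + d + alpha) * I t"

lemma S_has_derivative_within:
  assumes "t0 \<le> t"
  shows "(S has_real_derivative S_rate t) (at t within {t0..})"
  using solution[unfolded SEIRS_solution_def, rule_format, OF assms] B_eq_mu by blast

lemma S_has_derivative: "t0 < t \<Longrightarrow> (S has_real_derivative S_rate t) (at t)"
  using S_has_derivative_within[of t] at_within_atLeast_eq[of t0 t] by simp

lemma I_has_derivative: "t0 < t \<Longrightarrow> (I has_real_derivative I_rate t) (at t)"
  using solution[unfolded SEIRS_solution_def, rule_format, of t] at_within_atLeast_eq[of t0 t]
  by simp

lemma recov3_nonneg:
  assumes "t0 \<le> t"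
  shows "0 \<le> recov3 t0 fT3 mu I t"
proof -
  have "(\<lambda>r. fT3 r * I (t - r) * exp (- mu * r)) integrable_on {t0..}"
    using solution assms unfolding SEIRS_solution_def by simp
  then show ?thesis
    unfolding recov3_def
    by (rule integral_nonneg) (use density3 I_nonneg in \<open>simp add: density_on_def\<close>)
qed

lemma incid1_le:
  assumes "t0 \<le> t" and I_le: "\<And>x. t - h1 \<le> x \<Longrightarrow> I x \<le> m"
  shows "incid1 t0 h1 fT1 mu_v G I t \<le> m"
proof -
  have "incid1 t0 h1 fT1 mu_v G I t = integral {t0..h1} (\<lambda>s. fT1 s * (exp (- mu_v * s) * G (I (t - s))))"
    by (simp add: incid1_def mult.assoc)
  also have "\<dots> \<le> m"
  proof (rule integral_density_mult_le[OF density1])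
    show "(\<lambda>s. fT1 s * (exp (- mu_v * s) * G (I (t - s)))) integrable_on {t0..h1}"
      using solution \<open>t0 \<le> t\<close> by (simp add: SEIRS_solution_def mult.assoc)
    fix s assume s: "s \<in> {t0..h1}"
    have "exp (- mu_v * s) \<le> 1"
      using s t0_nonneg mu_v_nonneg by simp
    moreover have "0 \<le> G (I (t - s))" "G (I (t - s)) \<le> I (t - s)"
      using G_bounds[OF I_nonneg] by auto
    moreover have "I (t - s) \<le> m"
      using I_le s by simp
    ultimately show "exp (- mu_v * s) * G (I (t - s)) \<le> m"
      using mult_left_le_one_le[of "G (I (t - s))" "exp (- mu_v * s)"] by simp
  qed
  finally show ?thesis .
qed

lemma incid2_inner_le:
  assumes "t0 \<le> t" "u \<in> {t0..h2}" and I_le: "\<And>s. s \<in> {t0..h1} \<Longrightarrow> I (t - s - u) \<le> m"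
  shows "incid2_inner t0 h1 fT1 mu_v mu G I t u \<le> m * exp (- mu * u) * exp_mean {t0..h1} fT1 mu_v"
proof -
  have "incid2_inner t0 h1 fT1 mu_v mu G I t u
      \<le> integral {t0..h1} (\<lambda>s. m * exp (- mu * u) * (fT1 s * exp (- mu_v * s)))"
    unfolding incid2_inner_def
  proof (rule integral_le)
    show "(\<lambda>s. fT1 s * exp (- mu_v * s - mu * u) * G (I (t - s - u))) integrable_on {t0..h1}"
      using solution assms(1,2) by (simp add: SEIRS_solution_def)
    show "(\<lambda>s. m * exp (- mu * u) * (fT1 s * exp (- mu_v * s))) integrable_on {t0..h1}"
      by (intro integrable_on_mult_right density_mult_exp_integrable density1)
    fix s assume s: "s \<in> {t0..h1}"
    have "G (I (t - s - u)) \<le> m"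
      using G_bounds[OF I_nonneg] I_le[OF s] by (meson order_trans)
    moreover have "0 \<le> fT1 s"
      using density1 s by (simp add: density_on_def)
    ultimately have "fT1 s * exp (- mu_v * s - mu * u) * G (I (t - s - u))
        \<le> fT1 s * exp (- mu_v * s - mu * u) * m"
      by (intro mult_left_mono) auto
    also have "\<dots> = m * exp (- mu * u) * (fT1 s * exp (- mu_v * s))"
      by (simp add: exp_diff exp_minus field_simps)
    finally show "fT1 s * exp (- mu_v * s - mu * u) * G (I (t - s - u))
        \<le> m * exp (- mu * u) * (fT1 s * exp (- mu_v * s))" .
  qed
  then show ?thesis
    by (simp add: exp_mean_def)
qed

lemma incid2_le:
  assumes "t0 + h2 \<le> t" and I_le: "\<And>x. t - h1 - h2 \<le> x \<Longrightarrow> I x \<le> m"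
  shows "incid2 t0 h1 h2 fT1 fT2 mu_v mu G S I t \<le> m * exp_moment t0 h1 h2 fT1 fT2 mu_v mu"
proof -
  have "t0 \<le> t"
    using assms(1) h2_nonneg by linarith
  have "0 \<le> m"
    using I_nonneg[of t] I_le[of t] h1_nonneg h2_nonneg by linarith
  have mean1: "0 \<le> exp_mean {t0..h1} fT1 mu_v"
    using density1 by (rule exp_mean_nonneg)
  have "incid2 t0 h1 h2 fT1 fT2 mu_v mu G S I t
      \<le> integral {t0..h2} (\<lambda>u. m * exp_mean {t0..h1} fT1 mu_v * (fT2 u * exp (- mu * u)))"
    unfolding incid2_def
  proof (rule integral_le)
    show "(\<lambda>u. fT2 u * S (t - u) * incid2_inner t0 h1 fT1 mu_v mu G I t u) integrable_on {t0..h2}"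
      using solution \<open>t0 \<le> t\<close> by (simp add: SEIRS_solution_def)
    show "(\<lambda>u. m * exp_mean {t0..h1} fT1 mu_v * (fT2 u * exp (- mu * u))) integrable_on {t0..h2}"
      by (intro integrable_on_mult_right density_mult_exp_integrable density2)
    fix u assume u: "u \<in> {t0..h2}"
    let ?bound = "m * exp (- mu * u) * exp_mean {t0..h1} fT1 mu_v"
    have S_u: "0 \<le> S (t - u)" "S (t - u) \<le> 1"
      using S_bounds[of "t - u"] u assms(1) by auto
    have "0 \<le> ?bound" "0 \<le> fT2 u"
      using \<open>0 \<le> m\<close> mean1 density2 u by (auto simp: density_on_def)
    have "S (t - u) * incid2_inner t0 h1 fT1 mu_v mu G I t u \<le> S (t - u) * ?bound"
      using u \<open>t0 \<le> t\<close> S_u by (intro mult_left_mono incid2_inner_le I_le) auto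
    also have "\<dots> \<le> ?bound"
      using S_u \<open>0 \<le> ?bound\<close> by (intro mult_left_le_one_le)
    finally have "fT2 u * (S (t - u) * incid2_inner t0 h1 fT1 mu_v mu G I t u) \<le> fT2 u * ?bound"
      using \<open>0 \<le> fT2 u\<close> by (rule mult_left_mono)
    then show "fT2 u * S (t - u) * incid2_inner t0 h1 fT1 mu_v mu G I t u
        \<le> m * exp_mean {t0..h1} fT1 mu_v * (fT2 u * exp (- mu * u))"
      by (simp add: mult_ac)
  qed
  then show ?thesis
    by (simp only: integral_mult_right exp_moment_eq_exp_mean_mult exp_mean_def[of "{t0..h2}"]
        mult.assoc)
qed

lemma eventually_incid1_le:
  assumes "eventually (\<lambda>t. I t \<le> m) at_top"
  shows "eventually (\<lambda>t. incid1 t0 h1 fT1 mu_v G I t \<le> m) at_top"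
proof -
  obtain T where T: "\<And>x. T \<le> x \<Longrightarrow> I x \<le> m"
    using assms by (auto simp: eventually_at_top_linorder)
  show ?thesis
    using eventually_ge_at_top[of "max t0 T + h1"]
    by eventually_elim (use h1_nonneg in \<open>auto intro!: incid1_le T\<close>)
qed

lemma eventually_incid2_le:
  assumes "eventually (\<lambda>t. I t \<le> m) at_top"
  shows "eventually (\<lambda>t. incid2 t0 h1 h2 fT1 fT2 mu_v mu G S I t
           \<le> m * exp_moment t0 h1 h2 fT1 fT2 mu_v mu) at_top"
proof -
  obtain T where T: "\<And>x. T \<le> x \<Longrightarrow> I x \<le> m"
    using assms by (auto simp: eventually_at_top_linorder)
  show ?thesis
    using eventually_ge_at_top[of "max t0 T + h1 + h2"]
    by eventually_elim (use h1_nonneg in \<open>auto intro!: incid2_le T\<close>)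
qed

lemma eventually_I_rate_le:
  assumes "eventually (\<lambda>t. I t \<le> m) at_top"
  shows "eventually (\<lambda>t. (I has_real_derivative I_rate t) (at t)
    \<and> I_rate t \<le> beta * (m * exp_moment t0 h1 h2 fT1 fT2 mu_v mu) - (mu + d + alpha) * I t) at_top"
  using eventually_incid2_le[OF assms] eventually_gt_at_top[of t0]
proof eventually_elim
  case (elim t)
  then have "beta * incid2 t0 h1 h2 fT1 fT2 mu_v mu G S I t
      \<le> beta * (m * exp_moment t0 h1 h2 fT1 fT2 mu_v mu)"
    using beta_pos by (intro mult_left_mono) auto
  with I_has_derivative[of t] elim show ?case
    by simp
qed

lemma eventually_S_rate_ge:
  assumes "eventually (\<lambda>t. I t \<le> \<eta>) at_top"
  shows "eventually (\<lambda>t. (S has_real_derivative S_rate t) (at t)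
    \<and> mu - (beta * \<eta> + mu) * S t \<le> S_rate t) at_top"
  using eventually_incid1_le[OF assms] eventually_gt_at_top[of t0]
proof eventually_elim
  case (elim t)
  have "beta * S t * incid1 t0 h1 fT1 mu_v G I t \<le> beta * S t * \<eta>"
    using elim S_bounds[of t] beta_pos by (intro mult_left_mono) auto
  moreover have "0 \<le> alpha * recov3 t0 fT3 mu I t"
    using elim alpha_nonneg recov3_nonneg by simp
  ultimately have "mu - (beta * \<eta> + mu) * S t \<le> S_rate t"
    by (simp add: algebra_simps)
  with S_has_derivative[OF \<open>t0 < t\<close>] show ?case ..
qed

lemma I_tendsto_0: "(I \<longlongrightarrow> 0) at_top"
proof -
  define r where "r = beta * exp_moment t0 h1 h2 fT1 fT2 mu_v mu / (mu + d + alpha)"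
  have "0 < mu + d + alpha"
    using mu_pos alpha_nonneg d_nonneg by simp
  have "0 \<le> exp_moment t0 h1 h2 fT1 fT2 mu_v mu"
    using exp_mean_nonneg[OF density1] exp_mean_nonneg[OF density2]
    by (simp add: exp_moment_eq_exp_mean_mult)
  then have "0 \<le> r" "r < 1"
    using \<open>0 < mu + d + alpha\<close> beta_pos below_threshold by (simp_all add: r_def)
  show ?thesis
  proof (rule tendsto_zero_of_eventual_contraction[where q = "(1 + r) / 2" and M = 1])
    show "eventually (\<lambda>t. 0 \<le> I t) at_top"
      by (simp add: I_nonneg)
    show "eventually (\<lambda>t. I t \<le> 1) at_top"
      using eventually_ge_at_top[of t0] by eventually_elim (rule I_le_1)
    fix m :: real assume "0 < m" "eventually (\<lambda>t. I t \<le> m) at_top"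
    have "beta * (m * exp_moment t0 h1 h2 fT1 fT2 mu_v mu) / (mu + d + alpha) = r * m"
      by (simp add: r_def)
    also have "\<dots> < (1 + r) / 2 * m"
      using \<open>0 < m\<close> \<open>r < 1\<close> by (intro mult_strict_right_mono) auto
    finally have "eventually (\<lambda>t. I t < (1 + r) / 2 * m) at_top"
      by (rule eventually_less_of_linear_differential_inequality[OF \<open>0 < mu + d + alpha\<close> _
            eventually_I_rate_le[OF \<open>eventually (\<lambda>t. I t \<le> m) at_top\<close>]])
    then show "eventually (\<lambda>t. I t \<le> (1 + r) / 2 * m) at_top"
      by eventually_elim (rule less_imp_le)
  qed (use \<open>0 \<le> r\<close> \<open>r < 1\<close> in auto)
qed

lemma S_tendsto_1: "(S \<longlongrightarrow> 1) at_top"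
proof (rule order_tendstoI)
  fix a :: real assume "1 < a"
  show "eventually (\<lambda>t. S t < a) at_top"
    using eventually_ge_at_top[of t0]
  proof eventually_elim
    case (elim t)
    then show ?case using S_bounds[of t] \<open>1 < a\<close> by linarith
  qed
next
  fix a :: real assume "a < 1"
  \<comment> \<open>With incidence at most \<eta>, S' \<ge> mu - mu (2 - a) S, whose equilibrium 1 / (2 - a) exceeds a.\<close>
  define \<eta> where "\<eta> = mu * (1 - a) / beta"
  have "beta * \<eta> = mu * (1 - a)"
    using beta_pos by (simp add: \<eta>_def)
  then have "beta * \<eta> + mu = mu * (2 - a)"
    by (simp add: algebra_simps)
  have "eventually (\<lambda>t. I t \<le> \<eta>) at_top"
    using \<open>a < 1\<close> mu_pos beta_pos order_tendstoD(2)[OF I_tendsto_0, of \<eta>]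
    by (auto simp: \<eta>_def elim: eventually_mono)
  note rate = eventually_S_rate_ge[OF this, unfolded \<open>beta * \<eta> + mu = mu * (2 - a)\<close>]
  have "0 < mu * (2 - a)"
    using mu_pos \<open>a < 1\<close> by simp
  moreover have "a < mu / (mu * (2 - a))"
  proof -
    have "0 < (1 - a)\<^sup>2"
      using \<open>a < 1\<close> by simp
    then have "a * (2 - a) < 1"
      by (simp add: power2_eq_square algebra_simps)
    then have "a < 1 / (2 - a)"
      using \<open>a < 1\<close> by (simp add: pos_less_divide_eq)
    then show ?thesis
      using mu_pos by simp
  qed
  ultimately show "eventually (\<lambda>t. a < S t) at_top"
    by (rule eventually_greater_of_linear_differential_inequality[OF _ _ rate])
qed

lemma S_average_tendsto_1: "((\<lambda>t. (1 / t) * integral {t0..t} S) \<longlongrightarrow> 1) at_top"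
proof (rule tendsto_integral_average_at_top[OF _ S_tendsto_1])
  show "continuous_on {t0..} S"
    using S_has_derivative_within
    by (auto simp: continuous_on_eq_continuous_within intro: DERIV_continuous)
qed

end

lemma mult_less_of_R0_star_condition:
  fixes beta mu d alpha x :: real
  assumes "0 < beta" "0 < mu + d + alpha" "x \<le> 1"
    and "(R0_star beta mu d alpha \<ge> 1 \<and> x < 1 / R0_star beta mu d alpha)
         \<or> R0_star beta mu d alpha < 1"
  shows "beta * x < mu + d + alpha"
  using assms(4)
proof
  assume "R0_star beta mu d alpha < 1"
  then have "beta < mu + d + alpha"
    using assms(2) by (simp add: R0_star_def)
  moreover have "beta * x \<le> beta"
    using assms(1,3) by simp
  ultimately show ?thesis by linarith
next
  assume "R0_star beta mu d alpha \<ge> 1 \<and> x < 1 / R0_star beta mu d alpha"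
  then show ?thesis
    using assms(1,2) by (simp add: R0_star_def field_simps)
qed

theorem theorem5:
  fixes t0 h1 h2 B beta mu mu_v alpha d :: real
    and fT1 fT2 fT3 G g \<phi>1 \<phi>2 \<phi>3 \<phi>4 S E I R :: "real \<Rightarrow> real"
  assumes "t0 \<ge> 0" "h1 > 0" "h2 > 0"
    and "B > 0" "beta > 0" "mu > 0" "mu_v > 0" "alpha > 0" "d \<ge> 0"
    and "B / mu = 1"
    and "density_on {t0..h1} fT1" "density_on {t0..h2} fT2" "density_on {t0..} fT3"
    and "G_admissible G"
    and "UCg_weight t0 g"
    and "UCg t0 g \<phi>1" "UCg t0 g \<phi>2" "UCg t0 g \<phi>3" "UCg t0 g \<phi>4"
    and "\<phi>1 t0 > 0" "\<phi>2 t0 > 0" "\<phi>3 t0 > 0" "\<phi>4 t0 > 0"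
    and "\<forall>t\<le>t0. S t = \<phi>1 t \<and> E t = \<phi>2 t \<and> I t = \<phi>3 t \<and> R t = \<phi>4 t"
    and "SEIRS_solution t0 h1 h2 B beta mu mu_v alpha d fT1 fT2 fT3 G S E I R"
    and "\<forall>t\<ge>t0. S t > 0 \<and> E t > 0 \<and> I t > 0 \<and> R t > 0"
    and "\<forall>t\<ge>t0. D_expl B mu d (S t) (E t) (I t) (R t)"
    and "(R0_star beta mu d alpha \<ge> 1 \<and>
           exp_moment t0 h1 h2 fT1 fT2 mu_v mu < 1 / R0_star beta mu d alpha)
         \<or> R0_star beta mu d alpha < 1"
  shows "((\<lambda>t. (1 / t) * integral {t0..t} S) \<longlongrightarrow> B / mu) at_top"
proof -
  have "B = mu"
    using \<open>B / mu = 1\<close> \<open>mu > 0\<close> by (simp add: field_simps)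
  have D_expl_bounds: "0 \<le> S t \<and> S t \<le> 1 \<and> I t \<le> 1" if "t0 \<le> t" for t
    using assms(27) that \<open>B = mu\<close> \<open>mu > 0\<close> by (force simp: D_expl_def)
  have "0 \<le> I t" for t
  proof (cases "t \<le> t0")
    case True
    then show ?thesis using assms(18,24) by (simp add: UCg_def)
  next
    case False
    then show ?thesis using assms(26)[rule_format, of t] by simp
  qed
  moreover have "0 \<le> G x \<and> G x \<le> x" if "0 \<le> x" for x
    using \<open>G_admissible G\<close> that by (cases "x = 0") (auto simp: G_admissible_def)
  moreover have "beta * exp_moment t0 h1 h2 fT1 fT2 mu_v mu < mu + d + alpha"
    using assms(1,5,6,7,8,9,11,12,28)
    by (intro mult_less_of_R0_star_condition exp_moment_le_one) auto
  ultimately interpret SEIRS_extinction t0 h1 h2 B beta mu mu_v alpha d fT1 fT2 fT3 G S E I R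
    using assms(1-9,11-13,25) \<open>B = mu\<close> D_expl_bounds by unfold_locales auto
  show ?thesis
    using S_average_tendsto_1 \<open>B / mu = 1\<close> by simp
qed

end
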